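(* Let $\mathcal{K}$ be a continuous unitary representation of $\overline{\mathfrak{S}}_\infty$ in a Hilbert space $\mathcal{H}$, and let $n\geq 0$ be an integer. Then the sequence of operators $\{\mathcal{K}({}^n\sigma_m)\}_{m\in\mathbb{N}}$ converges in the weak operator topology to a self-adjoint operator $P_n$.
   Context: $\overline{\mathfrak{S}}_\infty$ is the group of all bijections of $\mathbb{N}=\{1,2,\dots\}$, with the Polish group topology in which the subgroups $\mathfrak{S}(n,\infty)=\{s\in\overline{\mathfrak{S}}_\infty: s(k)=k \text{ for } k=1,\dots,n\}$ form a fundamental system of neighborhoods of the identity; continuity of $\mathcal{K}$ means continuity into the unitary group with the strong operator topology, i.e. for each $\eta\in\mathcal{H}$, $\lim_{k\to\infty}\sup_{s\in\mathfrak{S}(k,\infty)}\|\mathcal{K}(s)\eta-\eta\|=0$. For $k\ne j$, $(k\;j)$ denotes the transposition interchanging $k$ and $j$. Define ${}^n\sigma_m=(n+1\;\;n+m+1)(n+2\;\;n+m+2)\cdots(n+m\;\;n+2m)$. *)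

theory Defs
  imports "HOL-Analysis.Analysis" "HOL-Combinatorics.Transposition"
begin

text \<open>A complex
inner product space is encoded (equivalently) as a real inner product space with a complex
structure for which multiplication by the imaginary unit is orthogonal; the complex inner
product is then recovered as cinner below (conjugate-linear in the first argument,
with real part the real inner product).\<close>

class complex_vector = real_vector +
  fixes scaleC :: "complex \<Rightarrow> 'a \<Rightarrow> 'a" (infixr \<open>*\<^sub>C\<close> 75)
  assumes scaleC_add_right: "a *\<^sub>C (x + y) = a *\<^sub>C x + a *\<^sub>C y"
    and scaleC_add_left: "(a + b) *\<^sub>C x = a *\<^sub>C x + b *\<^sub>C x"
    and scaleC_scaleC: "a *\<^sub>C (b *\<^sub>C x) = (a * b) *\<^sub>C x"
    and scaleC_one: "1 *\<^sub>C x = x"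
    and scaleR_scaleC: "r *\<^sub>R x = (complex_of_real r) *\<^sub>C x"

class complex_inner = complex_vector + real_inner +
  assumes inner_scaleC_ii: "inner (\<i> *\<^sub>C x) (\<i> *\<^sub>C y) = inner x y"

definition cinner :: "'a::complex_inner \<Rightarrow> 'a \<Rightarrow> complex" where
  "cinner x y = Complex (inner x y) (inner (\<i> *\<^sub>C x) y)"

definition clinear :: "('a::complex_vector \<Rightarrow> 'b::complex_vector) \<Rightarrow> bool" where
  "clinear T \<longleftrightarrow> (\<forall>x y. T (x + y) = T x + T y) \<and> (\<forall>c x. T (c *\<^sub>C x) = c *\<^sub>C T x)"

definition bounded_operator :: "('a::complex_inner \<Rightarrow> 'a) \<Rightarrow> bool" where
  "bounded_operator T \<longleftrightarrow> clinear T \<and> (\<exists>C. \<forall>x. norm (T x) \<le> C * norm x)"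

definition unitary :: "('a::complex_inner \<Rightarrow> 'a) \<Rightarrow> bool" where
  "unitary U \<longleftrightarrow> clinear U \<and> surj U \<and> (\<forall>x y. cinner (U x) (U y) = cinner x y)"

definition self_adjoint :: "('a::complex_inner \<Rightarrow> 'a) \<Rightarrow> bool" where
  "self_adjoint T \<longleftrightarrow> bounded_operator T \<and> (\<forall>x y. cinner (T x) y = cinner x (T y))"

definition wot_converges :: "(nat \<Rightarrow> 'a::complex_inner \<Rightarrow> 'a) \<Rightarrow> ('a \<Rightarrow> 'a) \<Rightarrow> bool" where
  "wot_converges A T \<longleftrightarrow> (\<forall>x y. (\<lambda>m. cinner (A m x) y) \<longlonglongrightarrow> cinner (T x) y)"

text \<open>Bijections of \<open>{1,2,...}\<close>, represented as functions on nat fixing 0.\<close>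
definition Sinf :: "(nat \<Rightarrow> nat) set" where
  "Sinf = {s. bij_betw s {1..} {1..} \<and> s 0 = 0}"

definition Sfix :: "nat \<Rightarrow> (nat \<Rightarrow> nat) set" where
  "Sfix n = {s \<in> Sinf. \<forall>k\<in>{1..n}. s k = k}"

definition cont_unitary_rep :: "((nat \<Rightarrow> nat) \<Rightarrow> 'a::complex_inner \<Rightarrow> 'a) \<Rightarrow> bool" where
  "cont_unitary_rep K \<longleftrightarrow>
     (\<forall>s\<in>Sinf. unitary (K s)) \<and>
     K id = id \<and>
     (\<forall>s\<in>Sinf. \<forall>t\<in>Sinf. K (s \<circ> t) = K s \<circ> K t) \<and>
     (\<forall>\<eta>. (\<lambda>k. SUP s\<in>Sfix k. norm (K s \<eta> - \<eta>)) \<longlonglongrightarrow> 0)"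

definition sigma :: "nat \<Rightarrow> nat \<Rightarrow> nat \<Rightarrow> nat" where
  "sigma n m = foldr (\<lambda>i f. Transposition.transpose (n + i) (n + m + i) \<circ> f) [1..<m+1] id"

end

theory Submission
  imports Defs
begin

text \<open>For \<open>2m \<le> M\<close>, let \<open>g\<close> exchange the blocks \<open>(n+m, n+2m]\<close> and \<open>(n+M, n+M+m]\<close>. Then
\<open>g \<sigma>\<^sub>m g\<close> agrees with \<open>\<sigma>\<^sub>M\<close> on \<open>{1..n+m}\<close>, so \<open>\<sigma>\<^sub>M = g \<sigma>\<^sub>m g \<rho>\<close> with \<open>g\<close> and \<open>\<rho>\<close>
in \<open>\<SS>(n+m,\<infinity>)\<close>. By continuity of the representation, \<open>K g\<close> and \<open>K \<rho>\<close> move fixed vectors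
\<open>x, y\<close> arbitrarily little once \<open>m\<close> is large, hence the matrix coefficients
\<open>\<langle>K(\<sigma>\<^sub>m) x, y\<rangle>\<close> form a Cauchy sequence. Their limit is a bounded form, represented by an
operator \<open>P\<close> through the Riesz representation theorem, the representing vector of a functional
\<open>f\<close> being the minimiser of \<open>\<parallel>w\<parallel>\<^sup>2/2 - f w\<close>. Finally \<open>P\<close> is self-adjoint because every
\<open>\<sigma>\<^sub>m\<close> is an involution, so that every \<open>K(\<sigma>\<^sub>m)\<close> is a self-adjoint unitary.\<close>

subsection \<open>Complex inner product spaces\<close>

lemma scaleC_ii_ii: "\<i> *\<^sub>C (\<i> *\<^sub>C x) = - (x::'a::complex_vector)"
proof -
  have "\<i> *\<^sub>C (\<i> *\<^sub>C x) = complex_of_real (-1) *\<^sub>C x" by (simp add: scaleC_scaleC)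
  also have "\<dots> = (-1) *\<^sub>R x" by (rule scaleR_scaleC[symmetric])
  finally show ?thesis by simp
qed

lemma inner_scaleC_ii_left: "inner (\<i> *\<^sub>C x) y = - inner x (\<i> *\<^sub>C (y::'a::complex_inner))"
proof -
  have "inner (\<i> *\<^sub>C x) y = inner (\<i> *\<^sub>C (\<i> *\<^sub>C x)) (\<i> *\<^sub>C y)" by (simp only: inner_scaleC_ii)
  then show ?thesis by (simp add: scaleC_ii_ii)
qed

lemma scaleC_Re_Im: "c *\<^sub>C x = Re c *\<^sub>R x + Im c *\<^sub>R (\<i> *\<^sub>C (x::'a::complex_vector))"
proof -
  have "c = complex_of_real (Re c) + complex_of_real (Im c) * \<i>"
    by (simp add: complex_eq_iff)
  then have "c *\<^sub>C x = complex_of_real (Re c) *\<^sub>C x + complex_of_real (Im c) *\<^sub>C (\<i> *\<^sub>C x)"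
    by (metis scaleC_add_left scaleC_scaleC)
  then show ?thesis by (simp add: scaleR_scaleC)
qed

lemma cinner_commute: "cinner y x = cnj (cinner x (y::'a::complex_inner))"
  using inner_scaleC_ii_left[of y x] by (simp add: cinner_def complex_eq_iff inner_commute)

lemma Re_cinner [simp]: "Re (cinner x y) = inner x y"
  by (simp add: cinner_def)

lemma clinear_diff:
  assumes "clinear T" shows "T (x - y) = T x - T y"
proof -
  have "T x = T (x - y) + T y"
    using assms unfolding clinear_def by (metis diff_add_cancel)
  then show ?thesis by simp
qed

lemma unitary_inner: "unitary U \<Longrightarrow> inner (U x) (U y) = inner x y"
  unfolding unitary_def by (metis Re_cinner)

lemma unitary_norm: "unitary U \<Longrightarrow> norm (U x) = norm x"
  by (simp add: norm_eq_sqrt_inner unitary_inner)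

lemma unitary_inner_diff_le:
  "unitary U \<Longrightarrow> \<bar>inner (U a) y - inner (U b) y\<bar> \<le> norm (a - b) * norm y"
proof -
  assume U: "unitary U"
  have "inner (U a) y - inner (U b) y = inner (U (a - b)) y"
    using U by (simp add: unitary_def clinear_diff inner_diff_left)
  also have "\<bar>\<dots>\<bar> \<le> norm (a - b) * norm y"
    using Cauchy_Schwarz_ineq2[of "U (a - b)" y] unitary_norm[OF U] by simp
  finally show ?thesis .
qed

lemma unitary_inner_shift_le:
  assumes "unitary U"
  shows "\<bar>inner (U u) y - inner u y\<bar> \<le> norm u * norm (U y - y)"
proof -
  have "inner (U u) y - inner u y = inner (U u) (y - U y)"
    using unitary_inner[OF assms] by (simp add: inner_diff_right)
  also have "\<bar>\<dots>\<bar> \<le> norm u * norm (U y - y)"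
    using Cauchy_Schwarz_ineq2[of "U u" "y - U y"] unitary_norm[OF assms]
    by (simp add: norm_minus_commute)
  finally show ?thesis .
qed

lemma unitary_involution_cinner_sym:
  assumes "unitary U" "\<And>x. U (U x) = x"
  shows "cinner (U x) y = cinner x (U y)"
  using assms unfolding unitary_def by metis

subsection \<open>Riesz representation and weak operator limits\<close>

lemma parallelogram_midpoint:
  fixes x y :: "'a::real_inner"
  shows "(norm (x - y))\<^sup>2 = 2 * (norm x)\<^sup>2 + 2 * (norm y)\<^sup>2 - 4 * (norm ((1/2) *\<^sub>R (x + y)))\<^sup>2"
proof -
  have "(norm ((1/2) *\<^sub>R (x + y)))\<^sup>2 = (norm (x + y))\<^sup>2 / 4"
    by (simp add: power2_eq_square)
  then show ?thesis
    by (simp add: dot_square_norm[symmetric] inner_simps inner_commute)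
qed

lemma quadratic_nonneg_imp_linear_coeff_zero:
  fixes a b :: real
  assumes "\<And>t. 0 \<le> t * a + t\<^sup>2 * b"
  shows "a = 0"
proof (rule ccontr)
  assume "a \<noteq> 0"
  define s where "s = 1 / (\<bar>b\<bar> + 1)"
  have "s > 0" "s * b < 1"
    unfolding s_def by (auto simp: field_simps)
  then have "a\<^sup>2 * s * (s * b - 1) < 0"
    using \<open>a \<noteq> 0\<close> by (simp add: mult_pos_neg)
  moreover have "(- a * s) * a + (- a * s)\<^sup>2 * b = a\<^sup>2 * s * (s * b - 1)"
    by (simp add: power2_eq_square algebra_simps)
  ultimately show False
    using assms[of "- a * s"] by linarith
qed

lemma minimizing_sequence_Cauchy:
  fixes f :: "'a::real_inner \<Rightarrow> real"
  assumes "linear f"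
    and c: "\<And>x. c \<le> (norm x)\<^sup>2 / 2 - f x"
    and lim: "(\<lambda>j. (norm (xs j))\<^sup>2 / 2 - f (xs j)) \<longlonglongrightarrow> c"
  shows "Cauchy xs"
proof (rule metric_CauchyI)
  interpret f: linear f by fact
  have bound: "(norm (xs i - xs j))\<^sup>2 \<le>
      4 * (((norm (xs i))\<^sup>2 / 2 - f (xs i) - c) + ((norm (xs j))\<^sup>2 / 2 - f (xs j) - c))" for i j
  proof -
    \<comment> \<open>parallelogram law, with the energy of the midpoint bounded below by \<open>c\<close>\<close>
    have "f ((1/2) *\<^sub>R (xs i + xs j)) = (f (xs i) + f (xs j)) / 2"
      by (simp add: f.scaleR f.add)
    then show ?thesis
      using parallelogram_midpoint[of "xs i" "xs j"] c[of "(1/2) *\<^sub>R (xs i + xs j)"] by argo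
  qed
  fix e :: real assume "e > 0"
  then have "e\<^sup>2 / 8 > 0" by simp
  from order_tendstoD(2)[OF lim, of "c + e\<^sup>2 / 8"] this
  obtain N where N: "\<And>j. j \<ge> N \<Longrightarrow> (norm (xs j))\<^sup>2 / 2 - f (xs j) < c + e\<^sup>2 / 8"
    unfolding eventually_sequentially by auto
  show "\<exists>M. \<forall>i\<ge>M. \<forall>j\<ge>M. dist (xs i) (xs j) < e"
  proof (intro exI allI impI)
    fix i j assume "N \<le> i" "N \<le> j"
    then have "(norm (xs i - xs j))\<^sup>2 < e\<^sup>2"
      using bound[of i j] N[OF \<open>N \<le> i\<close>] N[OF \<open>N \<le> j\<close>] by argo
    then show "dist (xs i) (xs j) < e"
      using \<open>e > 0\<close> by (simp add: dist_norm power_less_imp_less_base)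
  qed
qed

lemma energy_minimizer_exists:
  fixes f :: "'a::{real_inner, complete_space} \<Rightarrow> real"
  assumes "bounded_linear f"
  shows "\<exists>w. \<forall>x. (norm w)\<^sup>2 / 2 - f w \<le> (norm x)\<^sup>2 / 2 - f x"
proof -
  interpret f: bounded_linear f by fact
  define \<phi> where "\<phi> x = (norm x)\<^sup>2 / 2 - f x" for x
  obtain C where C: "\<And>x. norm (f x) \<le> norm x * C"
    using f.bounded by blast
  have "- (C\<^sup>2) / 2 \<le> \<phi> x" for x
  proof -
    have "f x \<le> norm x * C" using C[of x] by simp
    moreover have "0 \<le> (norm x - C)\<^sup>2" by simp
    ultimately show ?thesis unfolding \<phi>_def by (simp add: power2_eq_square algebra_simps)
  qed
  then have bdd: "bdd_below (range \<phi>)"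
    by (intro bdd_belowI2)
  define c where "c = Inf (range \<phi>)"
  have c: "c \<le> \<phi> x" for x
    unfolding c_def using bdd by (simp add: cInf_lower)
  have "c \<in> closure (range \<phi>)"
    unfolding c_def using bdd by (intro closure_contains_Inf) auto
  then obtain u where u: "\<And>j. u j \<in> range \<phi>" "u \<longlonglongrightarrow> c"
    unfolding closure_sequential by blast
  have "\<forall>j. \<exists>x. u j = \<phi> x"
    using u(1) by blast
  then obtain xs where "\<And>j. u j = \<phi> (xs j)"
    by metis
  then have "u = (\<lambda>j. \<phi> (xs j))"
    by auto
  with u(2) have lim: "(\<lambda>j. \<phi> (xs j)) \<longlonglongrightarrow> c"
    by simp
  have "Cauchy xs"
    using c lim unfolding \<phi>_def by (rule minimizing_sequence_Cauchy[OF f.linear_axioms])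
  then obtain w where "xs \<longlonglongrightarrow> w"
    using Cauchy_convergent_iff convergent_def by blast
  then have "(\<lambda>j. \<phi> (xs j)) \<longlonglongrightarrow> \<phi> w"
    unfolding \<phi>_def by (intro tendsto_intros f.tendsto) simp_all
  then have "\<phi> w = c"
    using lim LIMSEQ_unique by blast
  then show ?thesis
    using c unfolding \<phi>_def by auto
qed

lemma riesz_representation:
  fixes f :: "'a::{real_inner, complete_space} \<Rightarrow> real"
  assumes "bounded_linear f"
  shows "\<exists>w. \<forall>x. f x = inner w x"
proof -
  interpret f: bounded_linear f by fact
  obtain w where w: "\<And>x. (norm w)\<^sup>2 / 2 - f w \<le> (norm x)\<^sup>2 / 2 - f x"
    using energy_minimizer_exists[OF assms] by blast
  have "inner w x - f x = 0" for x
  proof (rule quadratic_nonneg_imp_linear_coeff_zero)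
    fix t :: real
    have "(norm (w + t *\<^sub>R x))\<^sup>2 = (norm w)\<^sup>2 + 2 * (t * inner w x) + t\<^sup>2 * (norm x)\<^sup>2"
      unfolding power2_norm_eq_inner by (simp add: inner_simps inner_commute power2_eq_square)
    then show "0 \<le> t * (inner w x - f x) + t\<^sup>2 * ((norm x)\<^sup>2 / 2)"
      using w[of "w + t *\<^sub>R x"] by (simp add: f.add f.scaleR algebra_simps)
  qed
  then show ?thesis by (metis eq_iff_diff_eq_0)
qed

lemma weak_limit_exists:
  fixes A :: "nat \<Rightarrow> 'a::{real_inner, complete_space} \<Rightarrow> 'a"
  assumes bound: "\<And>m x. norm (A m x) \<le> C * norm x"
    and conv: "\<And>x y. convergent (\<lambda>m. inner (A m x) y)"
  shows "\<exists>P. \<forall>x y. (\<lambda>m. inner (A m x) y) \<longlonglongrightarrow> inner (P x) y"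
proof -
  define L where "L x y = lim (\<lambda>m. inner (A m x) y)" for x y
  have lim: "(\<lambda>m. inner (A m x) y) \<longlonglongrightarrow> L x y" for x y
    unfolding L_def using conv convergent_LIMSEQ_iff by blast
  have "bounded_linear (L x)" for x
  proof (rule bounded_linear_intro)
    fix y z
    have "(\<lambda>m. inner (A m x) (y + z)) \<longlonglongrightarrow> L x y + L x z"
      unfolding inner_add_right by (intro tendsto_add lim)
    then show "L x (y + z) = L x y + L x z"
      using LIMSEQ_unique[OF lim] by blast
  next
    fix r y
    have "(\<lambda>m. inner (A m x) (r *\<^sub>R y)) \<longlonglongrightarrow> r * L x y"
      unfolding inner_scaleR_right by (intro tendsto_mult lim tendsto_const)
    then show "L x (r *\<^sub>R y) = r *\<^sub>R L x y"
      using LIMSEQ_unique[OF lim] by simp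
  next
    fix y
    have "\<bar>inner (A m x) y\<bar> \<le> norm y * (C * norm x)" for m
      using Cauchy_Schwarz_ineq2[of "A m x" y] mult_left_mono[OF bound[of m x], of "norm y"]
      by (simp add: mult.commute)
    then show "norm (L x y) \<le> norm y * (C * norm x)"
      using LIMSEQ_le_const2[OF tendsto_rabs[OF lim]] by auto
  qed
  then have "\<forall>x. \<exists>w. \<forall>y. L x y = inner w y"
    using riesz_representation by blast
  then obtain P where "\<And>x y. L x y = inner (P x) y"
    by metis
  then show ?thesis
    using lim by metis
qed

lemma weak_limit_clinear:
  fixes A :: "nat \<Rightarrow> 'a::complex_inner \<Rightarrow> 'a"
  assumes lin: "\<And>m. clinear (A m)"
    and lim: "\<And>x y. (\<lambda>m. inner (A m x) y) \<longlonglongrightarrow> inner (P x) y"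
  shows "clinear P"
  unfolding clinear_def
proof (intro conjI allI)
  fix x y
  have "(\<lambda>m. inner (A m (x + y)) z) \<longlonglongrightarrow> inner (P x + P y) z" for z
    using lin unfolding clinear_def by (simp add: inner_add_left tendsto_add lim)
  then show "P (x + y) = P x + P y"
    using LIMSEQ_unique[OF lim] by (metis vector_eq_rdot)
next
  fix c x
  have lim_ii: "(\<lambda>m. inner (\<i> *\<^sub>C A m x) z) \<longlonglongrightarrow> inner (\<i> *\<^sub>C P x) z" for z
    unfolding inner_scaleC_ii_left by (intro tendsto_minus lim)
  have "inner (A m (c *\<^sub>C x)) z = Re c * inner (A m x) z + Im c * inner (\<i> *\<^sub>C A m x) z" for m z
    using lin[of m] unfolding clinear_def by (simp add: scaleC_Re_Im[of c "A m x"] inner_add_left)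
  moreover have "inner (c *\<^sub>C P x) z = Re c * inner (P x) z + Im c * inner (\<i> *\<^sub>C P x) z" for z
    by (simp add: scaleC_Re_Im[of c "P x"] inner_add_left)
  ultimately have "(\<lambda>m. inner (A m (c *\<^sub>C x)) z) \<longlonglongrightarrow> inner (c *\<^sub>C P x) z" for z
    by (simp add: tendsto_intros lim lim_ii)
  then show "P (c *\<^sub>C x) = c *\<^sub>C P x"
    using LIMSEQ_unique[OF lim] by (metis vector_eq_rdot)
qed

lemma weak_limit_norm_le:
  assumes bound: "\<And>m x. norm (A m x) \<le> C * norm x"
    and lim: "\<And>x y. (\<lambda>m. inner (A m x) y) \<longlonglongrightarrow> inner (P x) y"
  shows "norm (P x) \<le> C * norm x"
proof (cases "P x = 0")
  case True
  then show ?thesis using order_trans[OF norm_ge_zero bound[of 0 x]] by simp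
next
  case False
  have "inner (A m x) (P x) \<le> C * norm x * norm (P x)" for m
    using norm_cauchy_schwarz[of "A m x" "P x"] bound[of m x]
    by (meson mult_right_mono norm_ge_zero order_trans)
  then have "norm (P x) * norm (P x) \<le> C * norm x * norm (P x)"
    using LIMSEQ_le_const2[OF lim[of x "P x"]] by (simp add: norm_eq_sqrt_inner)
  then show ?thesis
    using False by simp
qed

lemma wot_convergesI:
  assumes "\<And>x y. (\<lambda>m. inner (A m x) y) \<longlonglongrightarrow> inner (P x) y"
  shows "wot_converges A P"
  unfolding wot_converges_def cinner_def inner_scaleC_ii_left
  by (intro allI tendsto_Complex tendsto_minus assms)

lemma wot_limit_self_adjoint:
  assumes "wot_converges A P" "bounded_operator P"
    and "\<And>m x y. cinner (A m x) y = cinner x (A m y)"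
  shows "self_adjoint P"
proof -
  have "cinner (P x) y = cinner x (P y)" for x y
  proof -
    have "(\<lambda>m. cinner (A m x) y) \<longlonglongrightarrow> cinner x (P y)"
      using assms(1,3) unfolding wot_converges_def
      by (simp add: cinner_commute[of x] tendsto_cnj)
    then show ?thesis
      using assms(1) unfolding wot_converges_def by (metis LIMSEQ_unique)
  qed
  then show ?thesis
    using assms(2) unfolding self_adjoint_def by blast
qed

lemma wot_limit_exists:
  fixes A :: "nat \<Rightarrow> 'a::{complex_inner, complete_space} \<Rightarrow> 'a"
  assumes lin: "\<And>m. clinear (A m)"
    and bound: "\<And>m x. norm (A m x) \<le> C * norm x"
    and conv: "\<And>x y. convergent (\<lambda>m. inner (A m x) y)"
  shows "\<exists>P. bounded_operator P \<and> wot_converges A P"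
proof -
  obtain P where lim: "\<And>x y. (\<lambda>m. inner (A m x) y) \<longlonglongrightarrow> inner (P x) y"
    using weak_limit_exists[OF bound conv] by blast
  have "bounded_operator P"
    unfolding bounded_operator_def
    using weak_limit_clinear[OF lin lim] weak_limit_norm_le[OF bound lim] by blast
  moreover have "wot_converges A P"
    using lim by (rule wot_convergesI)
  ultimately show ?thesis
    by blast
qed

subsection \<open>Block exchanges in the infinite symmetric group\<close>

lemma Sinf_involutionI:
  assumes "\<And>j. s (s j) = j" "s 0 = 0" "\<And>j. j \<ge> 1 \<Longrightarrow> s j \<ge> 1"
  shows "s \<in> Sinf"
  unfolding Sinf_def using assms by (auto intro!: bij_betw_byWitness[where f'=s])

lemma Sinf_comp: "s \<in> Sinf \<Longrightarrow> t \<in> Sinf \<Longrightarrow> s \<circ> t \<in> Sinf"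
  unfolding Sinf_def by (auto intro: bij_betw_trans)

lemma Sfix_subset_Sinf: "Sfix k \<subseteq> Sinf"
  unfolding Sfix_def by blast

definition swap_blocks :: "nat \<Rightarrow> nat \<Rightarrow> nat \<Rightarrow> nat \<Rightarrow> nat" where
  "swap_blocks a b l j =
     (if a < j \<and> j \<le> a + l then j + (b - a) else if b < j \<and> j \<le> b + l then j - (b - a) else j)"

lemma swap_blocks_swap_blocks [simp]: "a + l \<le> b \<Longrightarrow> swap_blocks a b l (swap_blocks a b l j) = j"
  unfolding swap_blocks_def by auto

lemma swap_blocks_in_Sfix: "a + l \<le> b \<Longrightarrow> k \<le> a \<Longrightarrow> swap_blocks a b l \<in> Sfix k"
  unfolding Sfix_def by (auto intro!: Sinf_involutionI simp: swap_blocks_def)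

lemma foldr_comp_id: "foldr (\<lambda>i f. T i \<circ> f) xs g = foldr (\<lambda>i f. T i \<circ> f) xs id \<circ> g"
  by (induction xs) auto

lemma sigma_prefix:
  fixes n m :: nat
  defines "\<tau> \<equiv> \<lambda>i. Transposition.transpose (n + i) (n + m + i)"
  shows "j \<le> m \<Longrightarrow> foldr (\<lambda>i f. \<tau> i \<circ> f) [1..<j+1] id =
     (\<lambda>x. if n < x \<and> x \<le> n + j then x + m else if n + m < x \<and> x \<le> n + m + j then x - m else x)"
proof (induction j)
  case 0
  then show ?case by auto
next
  case (Suc j)
  have "[1..<Suc j + 1] = [1..<j+1] @ [j+1]" by simp
  then have "foldr (\<lambda>i f. \<tau> i \<circ> f) [1..<Suc j + 1] id = foldr (\<lambda>i f. \<tau> i \<circ> f) [1..<j+1] id \<circ> \<tau> (j + 1)"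
    by (simp only: foldr_append) (subst foldr_comp_id, simp)
  also have "\<dots> = (\<lambda>x. if n < x \<and> x \<le> n + Suc j then x + m
                       else if n + m < x \<and> x \<le> n + m + Suc j then x - m else x)"
    using Suc by (subst Suc.IH) (auto simp: \<tau>_def Transposition.transpose_def fun_eq_iff)
  finally show ?case .
qed

lemma sigma_eq_swap_blocks: "sigma n m = swap_blocks n (n + m) m"
  unfolding sigma_def swap_blocks_def using sigma_prefix[of m m n] by (auto simp: fun_eq_iff)

lemma sigma_in_Sinf: "sigma n m \<in> Sinf"
  unfolding sigma_eq_swap_blocks using swap_blocks_in_Sfix[of n m "n + m" 0] Sfix_subset_Sinf by auto

lemma sigma_sigma [simp]: "sigma n m (sigma n m j) = j"
  by (simp add: sigma_eq_swap_blocks)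

lemma sigma_conjugate_fixes:
  assumes "2 * m \<le> M" "j \<le> n + m"
  defines "g \<equiv> swap_blocks (n + m) (n + M) m"
  shows "g (sigma n m (g (sigma n M j))) = j"
  using assms unfolding g_def sigma_eq_swap_blocks swap_blocks_def by auto

subsection \<open>Matrix coefficients of \<open>K(\<sigma>\<^sub>m)\<close>\<close>

lemma rep_unitary: "cont_unitary_rep K \<Longrightarrow> s \<in> Sinf \<Longrightarrow> unitary (K s)"
  unfolding cont_unitary_rep_def by blast

lemma rep_comp: "cont_unitary_rep K \<Longrightarrow> s \<in> Sinf \<Longrightarrow> t \<in> Sinf \<Longrightarrow> K (s \<circ> t) = K s \<circ> K t"
  unfolding cont_unitary_rep_def by blast

lemma rep_involution:
  assumes K: "cont_unitary_rep K" and "s \<in> Sinf" "\<And>j. s (s j) = j"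
  shows "K s (K s x) = x"
proof -
  have "s \<circ> s = id" using assms(3) by auto
  then have "K s \<circ> K s = id"
    using K rep_comp[OF K assms(2,2)] unfolding cont_unitary_rep_def by simp
  then show ?thesis by (metis comp_apply id_apply)
qed

lemma rep_eventually_almost_fixes:
  assumes K: "cont_unitary_rep K" and "e > 0"
  shows "eventually (\<lambda>k. \<forall>s\<in>Sfix k. norm (K s x - x) < e) sequentially"
proof -
  have "(\<lambda>k. SUP s\<in>Sfix k. norm (K s x - x)) \<longlonglongrightarrow> 0"
    using K unfolding cont_unitary_rep_def by blast
  then have "eventually (\<lambda>k. (SUP s\<in>Sfix k. norm (K s x - x)) < e) sequentially"
    using \<open>e > 0\<close> by (rule order_tendstoD)
  moreover have "norm (K s x - x) \<le> (SUP s\<in>Sfix k. norm (K s x - x))" if "s \<in> Sfix k" for s k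
  proof (rule cSUP_upper[OF that bdd_aboveI2])
    fix t assume "t \<in> Sfix k"
    then have "norm (K t x) = norm x"
      using Sfix_subset_Sinf rep_unitary[OF K] unitary_norm by blast
    then show "norm (K t x - x) \<le> 2 * norm x"
      using norm_triangle_ineq4[of "K t x" x] by linarith
  qed
  ultimately show ?thesis
    by (elim eventually_mono) (meson le_less_trans)
qed

lemma rep_coefficient_conjugate_le:
  assumes K: "cont_unitary_rep K" and S: "g \<in> Sinf" "t \<in> Sinf" "\<rho> \<in> Sinf"
    and "norm (K g x - x) \<le> e" "norm (K \<rho> x - x) \<le> e" "norm (K g y - y) \<le> e"
  shows "\<bar>inner (K (g \<circ> t \<circ> g \<circ> \<rho>) x) y - inner (K t x) y\<bar> \<le> e * (2 * norm y + norm x)"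
proof -
  have S': "g \<circ> t \<in> Sinf" "g \<circ> t \<circ> g \<in> Sinf"
    using S by (simp_all add: Sinf_comp)
  have "\<bar>inner (K (g \<circ> t \<circ> g) (K \<rho> x)) y - inner (K (g \<circ> t \<circ> g) x) y\<bar> \<le> e * norm y"
    using unitary_inner_diff_le[OF rep_unitary[OF K S'(2)]] assms(6)
    by (meson mult_right_mono norm_ge_zero order_trans)
  moreover have "\<bar>inner (K (g \<circ> t) (K g x)) y - inner (K (g \<circ> t) x) y\<bar> \<le> e * norm y"
    using unitary_inner_diff_le[OF rep_unitary[OF K S'(1)]] assms(5)
    by (meson mult_right_mono norm_ge_zero order_trans)
  moreover have "\<bar>inner (K g (K t x)) y - inner (K t x) y\<bar> \<le> e * norm x"
    using unitary_inner_shift_le[OF rep_unitary[OF K S(1)], of "K t x" y]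
      unitary_norm[OF rep_unitary[OF K S(2)]] assms(7)
    by (metis mult_left_mono norm_ge_zero order_trans mult.commute)
  ultimately show ?thesis
    using S S' by (simp add: rep_comp[OF K] algebra_simps)
qed

lemma sigma_coefficient_diff_le:
  assumes K: "cont_unitary_rep K" and "2 * m \<le> M" "k \<le> n + m"
    and fix_x: "\<And>s. s \<in> Sfix k \<Longrightarrow> norm (K s x - x) \<le> e"
    and fix_y: "\<And>s. s \<in> Sfix k \<Longrightarrow> norm (K s y - y) \<le> e"
  shows "\<bar>inner (K (sigma n M) x) y - inner (K (sigma n m) x) y\<bar> \<le> e * (2 * norm y + norm x)"
proof -
  define g where "g = swap_blocks (n + m) (n + M) m"
  define \<rho> where "\<rho> = g \<circ> sigma n m \<circ> g \<circ> sigma n M"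
  have g: "g \<in> Sfix k" "\<And>j. g (g j) = j"
    unfolding g_def using assms(2,3) by (simp_all add: swap_blocks_in_Sfix)
  then have "\<rho> \<in> Sinf"
    unfolding \<rho>_def using Sfix_subset_Sinf by (blast intro: Sinf_comp sigma_in_Sinf)
  then have "\<rho> \<in> Sfix k"
    unfolding \<rho>_def g_def Sfix_def using sigma_conjugate_fixes[OF assms(2)] assms(3) by auto
  have "sigma n M = g \<circ> sigma n m \<circ> g \<circ> \<rho>"
    unfolding \<rho>_def using g(2) by (simp add: fun_eq_iff)
  then show ?thesis
    using rep_coefficient_conjugate_le[OF K _ sigma_in_Sinf] g(1) \<open>\<rho> \<in> Sfix k\<close> Sfix_subset_Sinf
      fix_x fix_y by (metis subsetD)
qed

lemma sigma_coefficient_convergent: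
  assumes K: "cont_unitary_rep K"
  shows "convergent (\<lambda>m. inner (K (sigma n m) x) y)"
proof -
  define C where "C = 2 * norm y + norm x"
  have "Cauchy (\<lambda>m. inner (K (sigma n m) x) y)"
  proof (rule metric_CauchyI)
    fix \<epsilon> :: real assume "\<epsilon> > 0"
    define e where "e = \<epsilon> / (2 * C + 1)"
    have "C \<ge> 0"
      unfolding C_def by simp
    then have "e > 0" "2 * e * C < \<epsilon>"
      unfolding e_def using \<open>\<epsilon> > 0\<close> by (simp_all add: field_simps)
    have "eventually (\<lambda>k. (\<forall>s\<in>Sfix k. norm (K s x - x) < e) \<and> (\<forall>s\<in>Sfix k. norm (K s y - y) < e))
        sequentially"
      using rep_eventually_almost_fixes[OF K \<open>e > 0\<close>] by (intro eventually_conj)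
    then obtain k where fix_x: "\<And>s. s \<in> Sfix k \<Longrightarrow> norm (K s x - x) \<le> e"
        and fix_y: "\<And>s. s \<in> Sfix k \<Longrightarrow> norm (K s y - y) \<le> e"
      unfolding eventually_sequentially by (meson order.refl less_imp_le)
    show "\<exists>N. \<forall>i\<ge>N. \<forall>j\<ge>N. dist (inner (K (sigma n i) x) y) (inner (K (sigma n j) x) y) < \<epsilon>"
    proof (intro exI allI impI)
      fix i j assume "k \<le> i" "k \<le> j"
      define M where "M = 2 * (i + j)"
      have "\<bar>inner (K (sigma n M) x) y - inner (K (sigma n i) x) y\<bar> \<le> e * C"
        "\<bar>inner (K (sigma n M) x) y - inner (K (sigma n j) x) y\<bar> \<le> e * C"
        unfolding C_def M_def using \<open>k \<le> i\<close> \<open>k \<le> j\<close>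
        by (intro sigma_coefficient_diff_le[OF K _ _ fix_x fix_y]; simp)+
      then show "dist (inner (K (sigma n i) x) y) (inner (K (sigma n j) x) y) < \<epsilon>"
        using \<open>2 * e * C < \<epsilon>\<close> unfolding dist_real_def by linarith
    qed
  qed
  then show ?thesis
    by (simp add: Cauchy_convergent_iff)
qed

theorem lemma1:
  fixes K :: "(nat \<Rightarrow> nat) \<Rightarrow> 'h::{complex_inner, complete_space} \<Rightarrow> 'h"
    and n :: nat
  assumes "cont_unitary_rep K"
  shows "\<exists>P. self_adjoint P \<and> wot_converges (\<lambda>m. K (sigma n (Suc m))) P"
proof -
  define A where "A m = K (sigma n (Suc m))" for m
  have U: "unitary (A m)" for m
    unfolding A_def using rep_unitary[OF assms sigma_in_Sinf] .
  have "convergent (\<lambda>m. inner (A m x) y)" for x y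
    unfolding A_def convergent_Suc_iff[of "\<lambda>m. inner (K (sigma n m) x) y"]
    by (rule sigma_coefficient_convergent[OF assms])
  moreover have "clinear (A m)" "norm (A m x) \<le> 1 * norm x" for m x
    using U unfolding unitary_def by (auto simp: unitary_norm[OF U])
  ultimately obtain P where "bounded_operator P" "wot_converges A P"
    using wot_limit_exists by blast
  moreover have "cinner (A m x) y = cinner x (A m y)" for m x y
    using unitary_involution_cinner_sym[OF U] rep_involution[OF assms sigma_in_Sinf]
    unfolding A_def by simp
  ultimately show ?thesis
    unfolding A_def by (blast intro: wot_limit_self_adjoint)
qed

end
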